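(* Consider the $q$-composite random key predistribution scheme on $n$ sensors with key pool size $P_n$ and key ring size $K_n$, where $q$ is a fixed positive integer (not depending on $n$) and $q\le K_n\le P_n$. Suppose an adversary captures a uniformly random set of $m=m(n)$ sensors and learns all keys in their key rings, and let $p_{\textnormal{compromised}}$ denote the probability that the secure link between two (distinct) non-captured sensors is compromised, conditioned on these two sensors sharing at least $q$ keys. If $$m = o\!\left(\frac{P_n}{K_n}\right)\quad (n\to\infty),$$ then $p_{\textnormal{compromised}} = o(1)$, i.e., $p_{\textnormal{compromised}}\to 0$ as $n\to\infty$.
   Context: In the $q$-composite scheme, each of the $n$ sensors independently receives a key ring consisting of $K_n$ distinct keys chosen uniformly at random among all $K_n$-subsets of a pool of $P_n$ keys. Two sensors have a secure link if and only if their key rings share at least $q$ keys. The secure link between two non-captured sensors is compromised if and only if every key shared by their two key rings belongs to the key ring of at least one captured sensor. All asymptotics are as $n\to\infty$; $x_n=o(y_n)$ means $x_n/y_n\to 0$. *)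

theory Defs
  imports Complex_Main "HOL-Library.Landau_Symbols" "HOL-Library.FuncSet"
begin

definition key_rings :: "nat \<Rightarrow> nat \<Rightarrow> nat set set" where
  "key_rings P K = {A. A \<subseteq> {..<P} \<and> card A = K}"

text \<open>All outcomes
  are equally likely, so probabilities are ratios of cardinalities.\<close>
definition sample_space :: "nat \<Rightarrow> nat \<Rightarrow> nat \<Rightarrow> nat \<Rightarrow> ((nat \<Rightarrow> nat set) \<times> nat set) set" where
  "sample_space n P K m =
     {(R, M). R \<in> PiE {..<n} (\<lambda>_. key_rings P K) \<and> M \<subseteq> {..<n} \<and> card M = m}"

definition cond_event :: "nat \<Rightarrow> nat \<Rightarrow> nat \<Rightarrow> nat \<Rightarrow> nat \<Rightarrow> nat \<Rightarrow> nat \<Rightarrow> ((nat \<Rightarrow> nat set) \<times> nat set) set" where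
  "cond_event n P K q m i j =
     {(R, M) \<in> sample_space n P K m. i \<notin> M \<and> j \<notin> M \<and> card (R i \<inter> R j) \<ge> q}"

definition compromise_event :: "nat \<Rightarrow> nat \<Rightarrow> nat \<Rightarrow> nat \<Rightarrow> nat \<Rightarrow> nat \<Rightarrow> nat \<Rightarrow> ((nat \<Rightarrow> nat set) \<times> nat set) set" where
  "compromise_event n P K q m i j =
     {(R, M) \<in> cond_event n P K q m i j. R i \<inter> R j \<subseteq> (\<Union>s\<in>M. R s)}"

definition p_compromised :: "nat \<Rightarrow> nat \<Rightarrow> nat \<Rightarrow> nat \<Rightarrow> nat \<Rightarrow> nat \<Rightarrow> nat \<Rightarrow> real" where
  "p_compromised n P K q m i j =
     real (card (compromise_event n P K q m i j)) / real (card (cond_event n P K q m i j))"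

end

theory Submission
  imports Defs "HOL-Combinatorics.Transposition"
begin

text \<open>If the link between i and j is compromised, then their smallest shared key k lies in
  the ring of some captured sensor s. The key k depends only on the rings of i and j, so
  for every key a the transposition of k and a, applied to the ring of s, is a
  cardinality-preserving involution of the outcomes; hence the event k \<in> R s is exactly
  as likely as a \<in> R s, and averaging over a shows that it has probability K/P. A union
  bound over the m captured sensors gives p_compromised \<le> m K / P.\<close>

lemma card_Collect_mult_eq_by_bijections:
  assumes A: "finite A" and T: "finite T"
    and bij: "\<And>t. t \<in> T \<Longrightarrow> bij_betw (f t) A A"
    and pullback: "\<And>t x. t \<in> T \<Longrightarrow> x \<in> A \<Longrightarrow> Q (f t x) \<longleftrightarrow> Q' t x"
    and count: "\<And>x. x \<in> A \<Longrightarrow> card {t\<in>T. Q' t x} = c"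
  shows "card T * card {x\<in>A. Q x} = c * card A"
proof -
  have "card {x\<in>A. Q' t x} = card {x\<in>A. Q x}" if t: "t \<in> T" for t
  proof (rule bij_betw_same_card, rule bij_betw_subset[OF bij[OF t]])
    have "f t ` A = A" using bij[OF t] by (simp add: bij_betw_def)
    then show "f t ` {x\<in>A. Q' t x} = {x\<in>A. Q x}"
      using pullback[OF t] by force
  qed blast
  then have "card T * card {x\<in>A. Q x} = (\<Sum>t\<in>T. card {x\<in>A. Q' t x})"
    by simp
  also have "\<dots> = c * card A"
    using A T count by (intro sum_multicount) auto
  finally show ?thesis .
qed

lemma transpose_image_in_key_rings:
  assumes "k < P" "a < P" "X \<in> key_rings P K"
  shows "transpose k a ` X \<in> key_rings P K"
proof -
  have "transpose k a x < P" if "x < P" for x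
    using assms(1,2) that by (simp add: transpose_def)
  then show ?thesis
    using assms(3) by (auto simp: key_rings_def card_image)
qed

lemma card_key_in_ring:
  fixes A :: "(('s \<Rightarrow> nat set) \<times> 'm) set" and key :: "('s \<Rightarrow> nat set) \<times> 'm \<Rightarrow> nat"
  assumes fin: "finite A"
    and ring: "\<And>R M. (R, M) \<in> A \<Longrightarrow> R s \<in> key_rings P K"
    and resample: "\<And>R M X. (R, M) \<in> A \<Longrightarrow> X \<in> key_rings P K \<Longrightarrow> (R(s := X), M) \<in> A"
    and key_indep: "\<And>R M X. (R, M) \<in> A \<Longrightarrow> key (R(s := X), M) = key (R, M)"
    and key_in_pool: "\<And>\<omega>. \<omega> \<in> A \<Longrightarrow> key \<omega> < P"
  shows "P * card {\<omega>\<in>A. key \<omega> \<in> fst \<omega> s} = K * card A"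
proof -
  define exchange where
    "exchange a = (\<lambda>(R, M). (R(s := transpose (key (R, M)) a ` R s), M))" for a
  have exchange_in: "exchange a \<omega> \<in> A"
    and key_exchange: "key (exchange a \<omega>) = key \<omega>"
    and exchange_exchange: "exchange a (exchange a \<omega>) = \<omega>"
    and ring_exchange: "fst (exchange a \<omega>) s = transpose (key \<omega>) a ` fst \<omega> s"
    if "a < P" "\<omega> \<in> A" for a \<omega>
  proof -
    obtain R M where \<omega>: "\<omega> = (R, M)" and RM: "(R, M) \<in> A"
      using \<open>\<omega> \<in> A\<close> by (cases \<omega>) simp
    have "transpose (key (R, M)) a ` R s \<in> key_rings P K"
      using \<open>a < P\<close> RM by (intro transpose_image_in_key_rings key_in_pool ring)
    then show "exchange a \<omega> \<in> A"
      using RM by (simp add: \<omega> exchange_def resample)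
    show key_eq: "key (exchange a \<omega>) = key \<omega>"
      using RM by (simp add: \<omega> exchange_def key_indep)
    show "fst (exchange a \<omega>) s = transpose (key \<omega>) a ` fst \<omega> s"
      by (simp add: \<omega> exchange_def)
    show "exchange a (exchange a \<omega>) = \<omega>"
      using key_eq by (simp add: \<omega> exchange_def image_comp)
  qed
  have "card {..<P} * card {\<omega>\<in>A. key \<omega> \<in> fst \<omega> s} = K * card A"
  proof (rule card_Collect_mult_eq_by_bijections[where f = exchange and Q' = "\<lambda>a \<omega>. a \<in> fst \<omega> s"])
    show "bij_betw (exchange a) A A" if "a \<in> {..<P}" for a
      using that by (intro bij_betw_byWitness[where f' = "exchange a"])
        (simp_all add: exchange_in exchange_exchange image_subset_iff)
    show "key (exchange a \<omega>) \<in> fst (exchange a \<omega>) s \<longleftrightarrow> a \<in> fst \<omega> s"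
      if "a \<in> {..<P}" "\<omega> \<in> A" for a \<omega>
      using that by (simp add: key_exchange ring_exchange in_transpose_image_iff)
    show "card {a\<in>{..<P}. a \<in> fst \<omega> s} = K" if "\<omega> \<in> A" for \<omega>
    proof -
      have "fst \<omega> s \<in> key_rings P K"
        using that ring[of "fst \<omega>" "snd \<omega>"] by simp
      then have "{a\<in>{..<P}. a \<in> fst \<omega> s} = fst \<omega> s" "card (fst \<omega> s) = K"
        by (auto simp: key_rings_def)
      then show ?thesis
        by simp
    qed
  qed (use fin in auto)
  then show ?thesis
    by simp
qed

lemma mem_cond_event:
  "(R, M) \<in> cond_event n P K q m i j \<longleftrightarrow>
     R \<in> PiE {..<n} (\<lambda>_. key_rings P K) \<and> M \<subseteq> {..<n} \<and> card M = m \<and>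
     i \<notin> M \<and> j \<notin> M \<and> q \<le> card (R i \<inter> R j)"
  by (simp add: cond_event_def sample_space_def)

lemma finite_cond_event: "finite (cond_event n P K q m i j)"
proof -
  have "finite (key_rings P K)"
    unfolding key_rings_def by (rule finite_subset[of _ "Pow {..<P}"]) auto
  then have "finite (PiE {..<n} (\<lambda>_. key_rings P K) \<times> Pow {..<n})"
    by (intro finite_cartesian_product finite_PiE) auto
  moreover have "cond_event n P K q m i j \<subseteq> PiE {..<n} (\<lambda>_. key_rings P K) \<times> Pow {..<n}"
    by (auto simp: cond_event_def sample_space_def)
  ultimately show ?thesis
    by (rule finite_subset[rotated])
qed

lemma Min_shared_key_mem:
  assumes "q > 0" "(R, M) \<in> cond_event n P K q m i j"
  shows "Min (R i \<inter> R j) \<in> R i \<inter> R j"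
proof -
  have "q \<le> card (R i \<inter> R j)"
    using assms(2) by (simp add: mem_cond_event)
  with \<open>q > 0\<close> have "finite (R i \<inter> R j)" "R i \<inter> R j \<noteq> {}"
    by (auto intro: card_ge_0_finite)
  then show ?thesis
    by (rule Min_in)
qed

lemma Min_shared_key_less:
  assumes "q > 0" "i < n" "(R, M) \<in> cond_event n P K q m i j"
  shows "Min (R i \<inter> R j) < P"
proof -
  have "Min (R i \<inter> R j) \<in> R i" "R i \<in> key_rings P K"
    using Min_shared_key_mem[OF assms(1,3)] assms(2,3) by (auto simp: mem_cond_event)
  then show ?thesis
    by (auto simp: key_rings_def)
qed

lemma compromise_event_subset:
  assumes "q > 0"
  shows "compromise_event n P K q m i j \<subseteq>
    (\<Union>s<n. {\<omega>\<in>cond_event n P K q m i j. s \<in> snd \<omega> \<and> Min (fst \<omega> i \<inter> fst \<omega> j) \<in> fst \<omega> s})"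
proof
  fix \<omega> assume "\<omega> \<in> compromise_event n P K q m i j"
  then obtain R M where \<omega>: "\<omega> = (R, M)" "(R, M) \<in> cond_event n P K q m i j"
    and covered: "R i \<inter> R j \<subseteq> (\<Union>s\<in>M. R s)"
    by (auto simp: compromise_event_def)
  obtain s where "s \<in> M" "Min (R i \<inter> R j) \<in> R s"
    using covered Min_shared_key_mem[OF assms \<omega>(2)] by blast
  moreover have "M \<subseteq> {..<n}"
    using \<omega>(2) by (simp add: mem_cond_event)
  ultimately show "\<omega> \<in> (\<Union>s<n. {\<omega>\<in>cond_event n P K q m i j. s \<in> snd \<omega> \<and> Min (fst \<omega> i \<inter> fst \<omega> j) \<in> fst \<omega> s})"
    using \<omega> by auto
qed

lemma card_captured_Min_shared_key_in_ring:
  assumes "q > 0" "i < n" "s < n"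
  shows "P * card {\<omega>\<in>cond_event n P K q m i j. s \<in> snd \<omega> \<and> Min (fst \<omega> i \<inter> fst \<omega> j) \<in> fst \<omega> s}
    = K * card {\<omega>\<in>cond_event n P K q m i j. s \<in> snd \<omega>}"
proof -
  define A where "A = {\<omega>\<in>cond_event n P K q m i j. s \<in> snd \<omega>}"
  have A_mem: "(R, M) \<in> A \<longleftrightarrow> (R, M) \<in> cond_event n P K q m i j \<and> s \<in> M" for R M
    by (simp add: A_def)
  have "P * card {\<omega>\<in>A. Min (fst \<omega> i \<inter> fst \<omega> j) \<in> fst \<omega> s} = K * card A"
  proof (rule card_key_in_ring)
    show "finite A"
      by (simp add: A_def finite_cond_event)
    fix R M X assume RM: "(R, M) \<in> A"
    then have "s \<noteq> i" "s \<noteq> j"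
      by (auto simp: A_mem mem_cond_event)
    then show "Min (fst (R(s := X), M) i \<inter> fst (R(s := X), M) j) = Min (fst (R, M) i \<inter> fst (R, M) j)"
      by simp
    show "R s \<in> key_rings P K"
      using RM \<open>s < n\<close> by (auto simp: A_mem mem_cond_event)
    assume "X \<in> key_rings P K"
    then have "R(s := X) \<in> PiE (insert s {..<n}) (\<lambda>_. key_rings P K)"
      using RM by (intro PiE_fun_upd) (simp_all add: A_mem mem_cond_event)
    with RM \<open>s \<noteq> i\<close> \<open>s \<noteq> j\<close> \<open>s < n\<close> show "(R(s := X), M) \<in> A"
      by (simp add: A_mem mem_cond_event insert_absorb)
  qed (use Min_shared_key_less[OF assms(1,2)] in \<open>auto simp: A_def\<close>)
  then show ?thesis
    by (simp add: A_def conj_assoc)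
qed

lemma sum_card_captured:
  "(\<Sum>s<n. card {\<omega>\<in>cond_event n P K q m i j. s \<in> snd \<omega>}) = m * card (cond_event n P K q m i j)"
proof (rule sum_multicount)
  show "\<forall>\<omega>\<in>cond_event n P K q m i j. card {s\<in>{..<n}. s \<in> snd \<omega>} = m"
  proof
    fix \<omega> assume "\<omega> \<in> cond_event n P K q m i j"
    then have "snd \<omega> \<subseteq> {..<n}" "card (snd \<omega>) = m"
      using mem_cond_event[of "fst \<omega>" "snd \<omega>"] by simp_all
    then have "{s\<in>{..<n}. s \<in> snd \<omega>} = snd \<omega>"
      by blast
    with \<open>card (snd \<omega>) = m\<close> show "card {s\<in>{..<n}. s \<in> snd \<omega>} = m"
      by simp
  qed
qed (simp_all add: finite_cond_event)

lemma card_compromise_event_le: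
  assumes "q > 0" "i < n"
  shows "P * card (compromise_event n P K q m i j) \<le> K * m * card (cond_event n P K q m i j)"
proof -
  define C where "C = cond_event n P K q m i j"
  define hit where "hit s = {\<omega>\<in>C. s \<in> snd \<omega> \<and> Min (fst \<omega> i \<inter> fst \<omega> j) \<in> fst \<omega> s}" for s
  have "card (compromise_event n P K q m i j) \<le> card (\<Union>s<n. hit s)"
    using compromise_event_subset[OF \<open>q > 0\<close>]
    by (intro card_mono) (simp_all add: hit_def C_def finite_cond_event)
  also have "\<dots> \<le> (\<Sum>s<n. card (hit s))"
    by (rule card_UN_le) simp
  finally have "P * card (compromise_event n P K q m i j) \<le> P * (\<Sum>s<n. card (hit s))"
    by simp
  also have "\<dots> = K * (\<Sum>s<n. card {\<omega>\<in>C. s \<in> snd \<omega>})"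
    using card_captured_Min_shared_key_in_ring[OF assms(1,2)]
    by (simp add: hit_def C_def sum_distrib_left)
  also have "\<dots> = K * m * card C"
    by (simp add: C_def sum_card_captured)
  finally show ?thesis
    by (simp add: C_def)
qed

lemma p_compromised_le:
  assumes "q > 0" "P > 0" "i < n"
  shows "p_compromised n P K q m i j \<le> real m * real K / real P"
proof -
  have "real P * card (compromise_event n P K q m i j) \<le> real K * m * card (cond_event n P K q m i j)"
    using card_compromise_event_le[OF assms(1,3)] by (metis of_nat_le_iff of_nat_mult)
  with \<open>P > 0\<close> show ?thesis
    by (cases "card (cond_event n P K q m i j) = 0")
      (simp_all add: p_compromised_def divide_le_eq le_divide_eq mult_ac)
qed

theorem theorem1:
  fixes q :: nat and P K m i j :: "nat \<Rightarrow> nat"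
  assumes q_pos: "q > 0"
    and qK: "\<And>n. q \<le> K n" and KP: "\<And>n. K n \<le> P n"
    and room: "eventually (\<lambda>n. m n + 2 \<le> n) sequentially"
    and pair: "eventually (\<lambda>n. i n < n \<and> j n < n \<and> i n \<noteq> j n) sequentially"
    and m_small: "(\<lambda>n. real (m n)) \<in> o(\<lambda>n. real (P n) / real (K n))"
  shows "(\<lambda>n. p_compromised n (P n) (K n) q (m n) (i n) (j n)) \<longlonglongrightarrow> 0"
proof (rule tendsto_sandwich[of "\<lambda>_. 0" _ _ "\<lambda>n. real (m n) * real (K n) / real (P n)"])
  show "\<forall>\<^sub>F n in sequentially. 0 \<le> p_compromised n (P n) (K n) q (m n) (i n) (j n)"
    by (simp add: p_compromised_def)
  have P_pos: "P n > 0" for n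
    using q_pos qK[of n] KP[of n] by linarith
  from pair show "\<forall>\<^sub>F n in sequentially.
      p_compromised n (P n) (K n) q (m n) (i n) (j n) \<le> real (m n) * real (K n) / real (P n)"
    by eventually_elim (simp add: p_compromised_le q_pos P_pos)
  have "(\<lambda>n. real (m n) / (real (P n) / real (K n))) \<longlonglongrightarrow> 0"
    using smalloD_tendsto[OF m_small] .
  then show "(\<lambda>n. real (m n) * real (K n) / real (P n)) \<longlonglongrightarrow> 0"
    by simp
qed simp

end
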